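(* Let $(\mathfrak{A},\mathfrak{A}_0)$ be a $*$-semisimple Banach quasi $*$-algebra with unit $\mathbb{1}$. Then the set $\mathfrak{A}_b$ of bounded elements of $\mathfrak{A}$ is a $*$-semisimple Banach algebra. Moreover, $\mathfrak{A}_b = R_w(\mathfrak{A})\cap L_w(\mathfrak{A})$.
   Context: A quasi $*$-algebra $(\mathfrak{A},\mathfrak{A}_0)$ consists of a vector space $\mathfrak{A}$ and a $*$-algebra $\mathfrak{A}_0\subseteq\mathfrak{A}$ such that $\mathfrak{A}$ carries an involution extending that of $\mathfrak{A}_0$, $\mathfrak{A}$ is an $\mathfrak{A}_0$-bimodule whose module multiplications extend the multiplication of $\mathfrak{A}_0$ with $(xa)y=x(ay)$, $a(xy)=(ax)y$ for $a\in\mathfrak{A}$, $x,y\in\mathfrak{A}_0$, and $(ax)^*=x^*a^*$. It is unital if there is $\mathbb{1}\in\mathfrak{A}_0$ with $a\mathbb{1}=a=\mathbb{1}a$ for all $a\in\mathfrak{A}$. It is a Banach quasi $*$-algebra if $\mathfrak{A}$ is a Banach space with norm $\|\cdot\|$ such that $\|a^*\|=\|a\|$, $\mathfrak{A}_0$ is dense in $\mathfrak{A}$, and for each $x\in\mathfrak{A}_0$ the map $a\mapsto ax$ is continuous on $\mathfrak{A}$. Let $\mathcal{S}_{\mathfrak{A}_0}(\mathfrak{A})$ be the set of sesquilinear forms $\varphi$ on $\mathfrak{A}\times\mathfrak{A}$ with $\varphi(a,a)\ge 0$, $\varphi(ax,y)=\varphi(x,a^*y)$ for $a\in\mathfrak{A}$,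 $x,y\in\mathfrak{A}_0$, and $|\varphi(a,b)|\le\|a\|\|b\|$ for all $a,b\in\mathfrak{A}$. The Banach quasi $*$-algebra is $*$-semisimple if $\varphi(a,a)=0$ for all $\varphi\in\mathcal{S}_{\mathfrak{A}_0}(\mathfrak{A})$ implies $a=0$. In that case, for $a,b\in\mathfrak{A}$ the weak product $a\,\square\, b$ is well defined if there is a (necessarily unique) $c\in\mathfrak{A}$ with $\varphi(bx,a^*y)=\varphi(cx,y)$ for all $x,y\in\mathfrak{A}_0$ and all $\varphi\in\mathcal{S}_{\mathfrak{A}_0}(\mathfrak{A})$; then $a\,\square\, b:=c$. $R_w(\mathfrak{A})$ (resp. $L_w(\mathfrak{A})$) is the set of $b\in\mathfrak{A}$ such that $a\,\square\, b$ (resp. $b\,\square\, a$) is well defined for every $a\in\mathfrak{A}$. An element $a\in\mathfrak{A}$ is bounded if the maps $L_a:\mathfrak{A}_0\to\mathfrak{A}$, $x\mapsto ax$, and $R_a:\mathfrak{A}_0\to\mathfrak{A}$, $x\mapsto xa$, are $\|\cdot\|$-continuous; $\mathfrak{A}_b$ denotes the set of bounded elements. *)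

theory Defs
  imports "HOL-Analysis.Analysis" "HOL-Library.Complex_Order"
begin

text \<open>
The Banach space \<open>A\<close> is the whole type \<open>'a\<close> (a real Banach space by
its type class), made into a complex Banach space by an explicit complex scalar
multiplication \<open>sc\<close> extending the real one and compatible with the norm.  A single operation \<open>m\<close> represents all
products: \<open>m a x\<close> (= ax) and \<open>m x a\<close> (= xa) are meaningful whenever one argument
lies in \<open>A0\<close>; on \<open>A0 \<times> A0\<close> it is the multiplication of \<open>A0\<close>.  \<open>invl\<close> is the involution.
\<close>

definition complex_banach :: "(complex \<Rightarrow> 'a::banach \<Rightarrow> 'a) \<Rightarrow> bool" where
  "complex_banach sc \<longleftrightarrow>
     (\<forall>r x. sc (complex_of_real r) x = r *\<^sub>R x) \<and>
     (\<forall>x. sc 1 x = x) \<and>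
     (\<forall>c d x. sc (c * d) x = sc c (sc d x)) \<and>
     (\<forall>c x y. sc c (x + y) = sc c x + sc c y) \<and>
     (\<forall>c d x. sc (c + d) x = sc c x + sc d x) \<and>
     (\<forall>c x. norm (sc c x) = cmod c * norm x)"

definition unital_quasi_star_algebra ::
  "(complex \<Rightarrow> 'a::banach \<Rightarrow> 'a) \<Rightarrow> 'a set \<Rightarrow> ('a \<Rightarrow> 'a \<Rightarrow> 'a) \<Rightarrow> ('a \<Rightarrow> 'a) \<Rightarrow> 'a \<Rightarrow> bool" where
  "unital_quasi_star_algebra sc A0 m invl u \<longleftrightarrow>
     \<comment> \<open>A0 is a complex subspace\<close>
     0 \<in> A0 \<and> (\<forall>x\<in>A0. \<forall>y\<in>A0. x + y \<in> A0) \<and> (\<forall>c. \<forall>x\<in>A0. sc c x \<in> A0) \<and>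
     \<comment> \<open>A0 is closed under product and involution\<close>
     (\<forall>x\<in>A0. \<forall>y\<in>A0. m x y \<in> A0) \<and> (\<forall>x\<in>A0. invl x \<in> A0) \<and>
     \<comment> \<open>involution on A\<close>
     (\<forall>a. invl (invl a) = a) \<and> (\<forall>a b. invl (a + b) = invl a + invl b) \<and>
     (\<forall>c a. invl (sc c a) = sc (cnj c) (invl a)) \<and>
     \<comment> \<open>bimodule: bilinearity of the module multiplications\<close>
     (\<forall>a b. \<forall>x\<in>A0. m (a + b) x = m a x + m b x \<and> m x (a + b) = m x a + m x b) \<and>
     (\<forall>a. \<forall>x\<in>A0. \<forall>y\<in>A0. m a (x + y) = m a x + m a y \<and> m (x + y) a = m x a + m y a) \<and>
     (\<forall>c a. \<forall>x\<in>A0. m (sc c a) x = sc c (m a x) \<and> m a (sc c x) = sc c (m a x)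
                     \<and> m x (sc c a) = sc c (m x a) \<and> m (sc c x) a = sc c (m x a)) \<and>
     \<comment> \<open>bimodule associativity laws\<close>
     (\<forall>a. \<forall>x\<in>A0. \<forall>y\<in>A0. m (m x a) y = m x (m a y)) \<and>
     (\<forall>a. \<forall>x\<in>A0. \<forall>y\<in>A0. m a (m x y) = m (m a x) y) \<and>
     (\<forall>a. \<forall>x\<in>A0. \<forall>y\<in>A0. m (m x y) a = m x (m y a)) \<and>
     \<comment> \<open>(ax)* = x* a*\<close>
     (\<forall>a. \<forall>x\<in>A0. invl (m a x) = m (invl x) (invl a)) \<and>
     \<comment> \<open>unit\<close>
     u \<in> A0 \<and> (\<forall>a. m a u = a \<and> m u a = a)"

definition banach_quasi_star_algebra ::
  "(complex \<Rightarrow> 'a::banach \<Rightarrow> 'a) \<Rightarrow> 'a set \<Rightarrow> ('a \<Rightarrow> 'a \<Rightarrow> 'a) \<Rightarrow> ('a \<Rightarrow> 'a) \<Rightarrow> 'a \<Rightarrow> bool" where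
  "banach_quasi_star_algebra sc A0 m invl u \<longleftrightarrow>
     complex_banach sc \<and> unital_quasi_star_algebra sc A0 m invl u \<and>
     (\<forall>a. norm (invl a) = norm a) \<and> closure A0 = UNIV \<and>
     (\<forall>x\<in>A0. continuous_on UNIV (\<lambda>a. m a x))"

definition sesquilinear_on :: "'a set \<Rightarrow> (complex \<Rightarrow> 'a::real_vector \<Rightarrow> 'a) \<Rightarrow> ('a \<Rightarrow> 'a \<Rightarrow> complex) \<Rightarrow> bool" where
  "sesquilinear_on B sc \<phi> \<longleftrightarrow>
     (\<forall>a\<in>B. \<forall>b\<in>B. \<forall>c\<in>B. \<phi> (a + b) c = \<phi> a c + \<phi> b c \<and> \<phi> c (a + b) = \<phi> c a + \<phi> c b) \<and>
     (\<forall>z. \<forall>a\<in>B. \<forall>b\<in>B. \<phi> (sc z a) b = z * \<phi> a b \<and> \<phi> a (sc z b) = cnj z * \<phi> a b)"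

definition S_forms ::
  "'a set \<Rightarrow> 'a set \<Rightarrow> ('a \<Rightarrow> 'a \<Rightarrow> 'a) \<Rightarrow> (complex \<Rightarrow> 'a::real_vector \<Rightarrow> 'a) \<Rightarrow> ('a \<Rightarrow> 'a) \<Rightarrow> ('a \<Rightarrow> real)
   \<Rightarrow> ('a \<Rightarrow> 'a \<Rightarrow> complex) set" where
  "S_forms B B0 m sc invl nrm = {\<phi>. sesquilinear_on B sc \<phi> \<and>
     (\<forall>a\<in>B. 0 \<le> \<phi> a a) \<and>
     (\<forall>a\<in>B. \<forall>x\<in>B0. \<forall>y\<in>B0. \<phi> (m a x) y = \<phi> x (m (invl a) y)) \<and>
     (\<forall>a\<in>B. \<forall>b\<in>B. cmod (\<phi> a b) \<le> nrm a * nrm b)}"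

definition star_semisimple ::
  "'a set \<Rightarrow> 'a set \<Rightarrow> ('a \<Rightarrow> 'a \<Rightarrow> 'a) \<Rightarrow> (complex \<Rightarrow> 'a::real_vector \<Rightarrow> 'a) \<Rightarrow> ('a \<Rightarrow> 'a) \<Rightarrow> ('a \<Rightarrow> real) \<Rightarrow> bool" where
  "star_semisimple B B0 m sc invl nrm \<longleftrightarrow>
     (\<forall>a\<in>B. (\<forall>\<phi>\<in>S_forms B B0 m sc invl nrm. \<phi> a a = 0) \<longrightarrow> a = 0)"

definition is_weak_prod ::
  "'a set \<Rightarrow> ('a \<Rightarrow> 'a \<Rightarrow> 'a) \<Rightarrow> (complex \<Rightarrow> 'a::real_normed_vector \<Rightarrow> 'a) \<Rightarrow> ('a \<Rightarrow> 'a) \<Rightarrow> 'a \<Rightarrow> 'a \<Rightarrow> 'a \<Rightarrow> bool" where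
  "is_weak_prod A0 m sc invl a b c \<longleftrightarrow>
     (\<forall>\<phi>\<in>S_forms UNIV A0 m sc invl norm. \<forall>x\<in>A0. \<forall>y\<in>A0. \<phi> (m b x) (m (invl a) y) = \<phi> (m c x) y)"

definition weak_prod ::
  "'a set \<Rightarrow> ('a \<Rightarrow> 'a \<Rightarrow> 'a) \<Rightarrow> (complex \<Rightarrow> 'a::real_normed_vector \<Rightarrow> 'a) \<Rightarrow> ('a \<Rightarrow> 'a) \<Rightarrow> 'a \<Rightarrow> 'a \<Rightarrow> 'a" where
  "weak_prod A0 m sc invl a b = (THE c. is_weak_prod A0 m sc invl a b c)"

definition Rw :: "'a set \<Rightarrow> ('a \<Rightarrow> 'a \<Rightarrow> 'a) \<Rightarrow> (complex \<Rightarrow> 'a::real_normed_vector \<Rightarrow> 'a) \<Rightarrow> ('a \<Rightarrow> 'a) \<Rightarrow> 'a set" where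
  "Rw A0 m sc invl = {b. \<forall>a. \<exists>c. is_weak_prod A0 m sc invl a b c}"

definition Lw :: "'a set \<Rightarrow> ('a \<Rightarrow> 'a \<Rightarrow> 'a) \<Rightarrow> (complex \<Rightarrow> 'a::real_normed_vector \<Rightarrow> 'a) \<Rightarrow> ('a \<Rightarrow> 'a) \<Rightarrow> 'a set" where
  "Lw A0 m sc invl = {b. \<forall>a. \<exists>c. is_weak_prod A0 m sc invl b a c}"

definition bounded_elems :: "'a set \<Rightarrow> ('a \<Rightarrow> 'a \<Rightarrow> 'a::real_normed_vector) \<Rightarrow> 'a set" where
  "bounded_elems A0 m = {a. continuous_on A0 (\<lambda>x. m a x) \<and> continuous_on A0 (\<lambda>x. m x a)}"

definition bnorm :: "'a set \<Rightarrow> ('a \<Rightarrow> 'a \<Rightarrow> 'a::real_normed_vector) \<Rightarrow> 'a \<Rightarrow> real" where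
  "bnorm A0 m a = max (SUP x\<in>{x\<in>A0. norm x \<le> 1}. norm (m a x))
                      (SUP x\<in>{x\<in>A0. norm x \<le> 1}. norm (m x a))"

definition banach_star_algebra_on ::
  "'a set \<Rightarrow> (complex \<Rightarrow> 'a::real_vector \<Rightarrow> 'a) \<Rightarrow> ('a \<Rightarrow> 'a \<Rightarrow> 'a) \<Rightarrow> ('a \<Rightarrow> 'a) \<Rightarrow> ('a \<Rightarrow> real) \<Rightarrow> bool" where
  "banach_star_algebra_on B sc p invl nrm \<longleftrightarrow>
     0 \<in> B \<and> (\<forall>a\<in>B. \<forall>b\<in>B. a + b \<in> B \<and> p a b \<in> B) \<and> (\<forall>c. \<forall>a\<in>B. sc c a \<in> B) \<and>
     (\<forall>a\<in>B. invl a \<in> B) \<and>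
     (\<forall>a\<in>B. \<forall>b\<in>B. \<forall>c\<in>B. p (p a b) c = p a (p b c)) \<and>
     (\<forall>a\<in>B. \<forall>b\<in>B. \<forall>c\<in>B. p (a + b) c = p a c + p b c \<and> p a (b + c) = p a b + p a c) \<and>
     (\<forall>z. \<forall>a\<in>B. \<forall>b\<in>B. p (sc z a) b = sc z (p a b) \<and> p a (sc z b) = sc z (p a b)) \<and>
     (\<forall>a\<in>B. \<forall>b\<in>B. invl (p a b) = p (invl b) (invl a)) \<and>
     (\<forall>a\<in>B. 0 \<le> nrm a \<and> (nrm a = 0 \<longleftrightarrow> a = 0)) \<and>
     (\<forall>a\<in>B. \<forall>b\<in>B. nrm (a + b) \<le> nrm a + nrm b) \<and>
     (\<forall>z. \<forall>a\<in>B. nrm (sc z a) = cmod z * nrm a) \<and>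
     (\<forall>a\<in>B. \<forall>b\<in>B. nrm (p a b) \<le> nrm a * nrm b) \<and>
     (\<forall>a\<in>B. nrm (invl a) = nrm a) \<and>
     (\<forall>X. (\<forall>n. X n \<in> B) \<longrightarrow>
          (\<forall>e>0. \<exists>N. \<forall>k\<ge>N. \<forall>n\<ge>N. nrm (X k - X n) < e) \<longrightarrow>
          (\<exists>l\<in>B. (\<lambda>n. nrm (X n - l)) \<longlonglongrightarrow> 0))"

end

theory Submission
  imports Defs
begin

text \<open>
  For a bounded element \<open>a\<close> the multiplications \<open>x \<mapsto> a x\<close> and \<open>x \<mapsto> x a\<close> extend from the
  dense subalgebra \<open>A0\<close> to bounded operators on \<open>A\<close>, and these extensions are the weak products
  \<open>a \<box> b\<close> and \<open>b \<box> a\<close>; the norm of \<open>A_b\<close> is the larger of the two operator norms on \<open>A0\<close>.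
  Every Banach *-algebra law for \<open>(A_b, \<box>)\<close> then becomes an identity between bounded operators
  that agree on \<open>A0\<close>. Completeness holds because \<open>norm a \<le> bnorm a * norm 1\<close> and operator
  bounds survive norm limits. A form of \<open>S_A0(A)\<close>, divided by \<open>M\<^sup>2\<close> with \<open>norm 1 \<le> M\<close>, lies
  in \<open>S_Ab(A_b)\<close>, so *-semisimplicity passes to \<open>A_b\<close>.

  Conversely, if \<open>b \<in> R_w(A)\<close> then \<open>a \<mapsto> a \<box> b\<close> is linear and has a closed graph, because
  the forms separate points. By the closed graph theorem it is bounded, and it extends
  \<open>x \<mapsto> x b\<close>. The same argument works for \<open>L_w(A)\<close>, hence \<open>A_b = R_w(A) \<inter> L_w(A)\<close>.
\<close>

section \<open>Linear maps on dense subspaces\<close>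

definition linear_on :: "'a::real_vector set \<Rightarrow> ('a \<Rightarrow> 'b::real_vector) \<Rightarrow> bool" where
  "linear_on D f \<longleftrightarrow> (\<forall>x\<in>D. \<forall>y\<in>D. f (x + y) = f x + f y) \<and> (\<forall>r. \<forall>x\<in>D. f (r *\<^sub>R x) = r *\<^sub>R f x)"

lemma linear_onI:
  assumes "\<And>x y. x \<in> D \<Longrightarrow> y \<in> D \<Longrightarrow> f (x + y) = f x + f y"
    and "\<And>r x. x \<in> D \<Longrightarrow> f (r *\<^sub>R x) = r *\<^sub>R f x"
  shows "linear_on D f"
  using assms by (simp add: linear_on_def)

lemma linear_on_zero: "linear_on D f \<Longrightarrow> 0 \<in> D \<Longrightarrow> f 0 = 0"
  unfolding linear_on_def by (metis scaleR_zero_left)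

lemma linear_on_diff:
  assumes D: "subspace D" and f: "linear_on D f" and x: "x \<in> D" and y: "y \<in> D"
  shows "f (x - y) = f x - f y"
proof -
  have "(-1) *\<^sub>R y \<in> D" using D y by (rule subspace_mul)
  then have "f (x + (-1) *\<^sub>R y) = f x + (-1) *\<^sub>R f y"
    using f x y unfolding linear_on_def by (simp only:)
  then show ?thesis by simp
qed

lemma continuous_eq_on_dense:
  fixes f g :: "'a::topological_space \<Rightarrow> 'b::t2_space"
  assumes "closure D = UNIV" "continuous_on UNIV f" "continuous_on UNIV g"
    and "\<And>x. x \<in> D \<Longrightarrow> f x = g x"
  shows "f x = g x"
proof -
  have "closure D \<subseteq> {x. f x = g x}"
    using assms(4) closed_Collect_eq[OF assms(2,3)] by (intro closure_minimal) auto
  then show ?thesis using assms(1) by auto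
qed

lemma continuous_le_on_dense:
  fixes f g :: "'a::topological_space \<Rightarrow> real"
  assumes "closure D = UNIV" "continuous_on UNIV f" "continuous_on UNIV g"
    and "\<And>x. x \<in> D \<Longrightarrow> f x \<le> g x"
  shows "f x \<le> g x"
proof -
  have "closure D \<subseteq> {x. f x \<le> g x}"
    using assms(4) closed_Collect_le[OF assms(2,3)] by (intro closure_minimal) auto
  then show ?thesis using assms(1) by auto
qed

lemma bounded_linear_eq_on_dense:
  assumes "closure D = UNIV" "bounded_linear f" "bounded_linear g" "\<And>x. x \<in> D \<Longrightarrow> f x = g x"
  shows "f x = g x"
  by (rule continuous_eq_on_dense[OF assms(1) linear_continuous_on[OF assms(2)]
        linear_continuous_on[OF assms(3)] assms(4)])

lemma continuous_linear_on_imp_bounded: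
  assumes D: "subspace D" and f: "linear_on D f" and cont: "continuous_on D f"
  shows "\<exists>K\<ge>0. \<forall>x\<in>D. norm (f x) \<le> K * norm x"
proof -
  have D0: "0 \<in> D" using D by (rule subspace_0)
  have f0: "f 0 = 0" using f D0 by (rule linear_on_zero)
  obtain d where d: "d > 0" "\<And>x. x \<in> D \<Longrightarrow> dist x 0 < d \<Longrightarrow> dist (f x) (f 0) < 1"
    using cont D0 unfolding continuous_on_iff by (metis zero_less_one)
  have "norm (f x) \<le> 2 / d * norm x" if x: "x \<in> D" for x
  proof (cases "x = 0")
    case True
    then show ?thesis by (simp add: f0)
  next
    case False
    define s where "s = d / (2 * norm x)"
    have s: "s > 0" "norm (s *\<^sub>R x) < d" using False d by (simp_all add: s_def)
    have "s *\<^sub>R x \<in> D" using D x by (rule subspace_mul)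
    then have "norm (f (s *\<^sub>R x)) < 1" using d(2) s(2) by (simp add: f0)
    then have "s * norm (f x) < 1" using f x s(1) by (simp add: linear_on_def)
    then show ?thesis using False d by (simp add: s_def field_simps)
  qed
  then show ?thesis using d(1) by (intro exI[of _ "2 / d"]) auto
qed

lemma bounded_linear_on_imp_lipschitz_on:
  assumes D: "subspace D" and f: "linear_on D f"
    and K: "0 \<le> K" "\<And>x. x \<in> D \<Longrightarrow> norm (f x) \<le> K * norm x"
  shows "K-lipschitz_on D f"
proof (rule lipschitz_onI)
  fix x y assume "x \<in> D" "y \<in> D"
  then show "dist (f x) (f y) \<le> K * dist x y"
    using K(2)[of "x - y"] by (simp add: dist_norm linear_on_diff[OF D f] subspace_diff[OF D])
qed (rule K(1))

lemma linear_on_continuous_on_iff_bounded: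
  assumes "subspace D" "linear_on D f"
  shows "continuous_on D f \<longleftrightarrow> (\<exists>K. \<forall>x\<in>D. norm (f x) \<le> K * norm x)"
proof
  assume "continuous_on D f"
  then show "\<exists>K. \<forall>x\<in>D. norm (f x) \<le> K * norm x"
    using continuous_linear_on_imp_bounded[OF assms] by blast
next
  assume "\<exists>K. \<forall>x\<in>D. norm (f x) \<le> K * norm x"
  then obtain K where "\<forall>x\<in>D. norm (f x) \<le> K * norm x" by blast
  then have "\<forall>x\<in>D. norm (f x) \<le> max K 0 * norm x"
    by (metis max.cobounded1 mult_right_mono norm_ge_zero order_trans)
  then show "continuous_on D f"
    by (intro lipschitz_on_continuous_on[OF bounded_linear_on_imp_lipschitz_on[OF assms, of "max K 0"]]) auto
qed

lemma continuous_linear_imp_bounded_linear: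
  assumes "linear f" "continuous_on UNIV f"
  shows "bounded_linear f"
proof -
  have "linear_on UNIV f" using assms(1) by (simp add: linear_on_def linear_add linear_scale)
  then obtain K where "\<And>x. norm (f x) \<le> K * norm x"
    using continuous_linear_on_imp_bounded[OF subspace_UNIV _ assms(2)] by auto
  then show ?thesis
    using assms(1) by (intro bounded_linear_intro[where K = K]) (simp_all add: linear_add linear_scale mult.commute)
qed

text \<open>This is an arbitrary function when no bounded linear extension of \<open>f\<close> exists.\<close>

definition dense_extension :: "'a::real_normed_vector set \<Rightarrow> ('a \<Rightarrow> 'b::real_normed_vector) \<Rightarrow> 'a \<Rightarrow> 'b" where
  "dense_extension D f = (SOME g. bounded_linear g \<and> (\<forall>x\<in>D. g x = f x))"

lemma bounded_linear_extension_exists: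
  fixes f :: "'a::real_normed_vector \<Rightarrow> 'b::banach"
  assumes dense: "closure D = UNIV" and D: "subspace D" and f: "linear_on D f"
    and cont: "continuous_on D f"
  shows "\<exists>g. bounded_linear g \<and> (\<forall>x\<in>D. g x = f x)"
proof -
  obtain K where K: "K \<ge> 0" "\<And>x. x \<in> D \<Longrightarrow> norm (f x) \<le> K * norm x"
    using continuous_linear_on_imp_bounded[OF D f cont] by blast
  have "uniformly_continuous_on D f"
    using bounded_linear_on_imp_lipschitz_on[OF D f K] by (rule lipschitz_on_uniformly_continuous)
  then obtain g where "uniformly_continuous_on (closure D) g" and g: "\<And>x. x \<in> D \<Longrightarrow> f x = g x"
    using uniformly_continuous_on_extension_on_closure by metis
  then have gc: "continuous_on UNIV g" using dense uniformly_continuous_imp_continuous by metis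
  have g_comp: "continuous_on UNIV (\<lambda>x. g (h x))" if "continuous_on UNIV h" for h
    using continuous_on_compose2[OF gc that] by simp
  have add_D: "g (x + y) = g x + g y" if y: "y \<in> D" for x y
  proof (rule continuous_eq_on_dense[OF dense, of "\<lambda>x. g (x + y)"])
    show "g (x + y) = g x + g y" if "x \<in> D" for x
      using that y f D by (simp add: g[symmetric] subspace_add linear_on_def)
  qed (intro g_comp continuous_on_add gc continuous_on_id continuous_on_const)+
  have "g (x + y) = g x + g y" for x y
    by (rule continuous_eq_on_dense[OF dense, of "\<lambda>y. g (x + y)"])
       ((intro g_comp continuous_on_add gc continuous_on_id continuous_on_const)+, rule add_D)
  moreover have "g (r *\<^sub>R x) = r *\<^sub>R g x" for r x
  proof (rule continuous_eq_on_dense[OF dense, of "\<lambda>x. g (r *\<^sub>R x)"])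
    show "g (r *\<^sub>R x) = r *\<^sub>R g x" if "x \<in> D" for x
      using that f D by (simp add: g[symmetric] subspace_mul linear_on_def)
  qed (intro g_comp continuous_on_scaleR gc continuous_on_id continuous_on_const)+
  moreover have "norm (g x) \<le> norm x * K" for x
  proof (rule continuous_le_on_dense[OF dense, of "\<lambda>x. norm (g x)"])
    show "norm (g x) \<le> norm x * K" if "x \<in> D" for x
      using K(2)[OF that] by (simp add: g[symmetric] that mult.commute)
  qed (intro continuous_on_norm continuous_on_mult gc continuous_on_id continuous_on_const)+
  ultimately have "bounded_linear g" by (rule bounded_linear_intro)
  then show ?thesis using g by metis
qed

lemma dense_extension:
  fixes f :: "'a::real_normed_vector \<Rightarrow> 'b::banach"
  assumes "closure D = UNIV" "subspace D" "linear_on D f" "continuous_on D f"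
  shows "bounded_linear (dense_extension D f)" "x \<in> D \<Longrightarrow> dense_extension D f x = f x"
proof -
  have "bounded_linear (dense_extension D f) \<and> (\<forall>x\<in>D. dense_extension D f x = f x)"
    unfolding dense_extension_def by (rule someI_ex[OF bounded_linear_extension_exists[OF assms]])
  then show "bounded_linear (dense_extension D f)" "x \<in> D \<Longrightarrow> dense_extension D f x = f x"
    by auto
qed

definition onorm_on :: "'a::real_normed_vector set \<Rightarrow> ('a \<Rightarrow> 'b::real_normed_vector) \<Rightarrow> real" where
  "onorm_on D f = (SUP x\<in>{x\<in>D. norm x \<le> 1}. norm (f x))"

lemma onorm_on_upper:
  assumes "\<And>x. x \<in> D \<Longrightarrow> norm (f x) \<le> K * norm x" "x \<in> D" "norm x \<le> 1"
  shows "norm (f x) \<le> onorm_on D f"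
  unfolding onorm_on_def
proof (rule cSUP_upper)
  have "norm (f y) \<le> max K 0" if "y \<in> D" "norm y \<le> 1" for y
  proof -
    have "K * norm y \<le> max K 0 * norm y" by (intro mult_right_mono) auto
    also have "\<dots> \<le> max K 0" using that(2) by (intro mult_left_le) auto
    finally show ?thesis using assms(1)[OF that(1)] by linarith
  qed
  then show "bdd_above ((\<lambda>x. norm (f x)) ` {x\<in>D. norm x \<le> 1})" by (auto intro!: bdd_aboveI2)
qed (use assms in auto)

lemma onorm_on_nonneg:
  assumes "subspace D" "linear_on D f" "\<And>x. x \<in> D \<Longrightarrow> norm (f x) \<le> K * norm x"
  shows "0 \<le> onorm_on D f"
  using onorm_on_upper[OF assms(3) subspace_0[OF assms(1)]] linear_on_zero[OF assms(2) subspace_0[OF assms(1)]]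
  by simp

lemma norm_le_onorm_on:
  assumes D: "subspace D" and f: "linear_on D f" and K: "\<And>x. x \<in> D \<Longrightarrow> norm (f x) \<le> K * norm x"
    and x: "x \<in> D"
  shows "norm (f x) \<le> onorm_on D f * norm x"
proof (cases "x = 0")
  case True
  then show ?thesis using linear_on_zero[OF f] subspace_0[OF D] by simp
next
  case False
  define y where "y = (1 / norm x) *\<^sub>R x"
  have y: "y \<in> D" "norm y \<le> 1" using False subspace_mul[OF D x] by (auto simp: y_def)
  have "norm (f x) = norm x * norm (f y)"
    using False f x by (simp add: y_def linear_on_def)
  also have "\<dots> \<le> norm x * onorm_on D f" by (intro mult_left_mono onorm_on_upper[OF K y]) auto
  finally show ?thesis by (simp add: mult.commute)
qed

lemma onorm_on_le:
  assumes "0 \<in> D" "0 \<le> e" "\<And>x. x \<in> D \<Longrightarrow> norm (f x) \<le> e * norm x"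
  shows "onorm_on D f \<le> e"
  unfolding onorm_on_def
proof (rule cSUP_least)
  show "{x\<in>D. norm x \<le> 1} \<noteq> {}" using assms(1) by auto
  show "norm (f x) \<le> e" if "x \<in> {x\<in>D. norm x \<le> 1}" for x
    using assms(3)[of x] mult_left_le[of "norm x" e] that assms(2) by auto
qed

section \<open>The closed graph theorem\<close>

lemma Baire_interior_nonempty:
  fixes F :: "nat \<Rightarrow> 'a::complete_space set"
  assumes "\<And>n. closed (F n)" "(\<Union>n. F n) = UNIV"
  shows "\<exists>n. interior (F n) \<noteq> {}"
proof (rule ccontr)
  assume "\<not> ?thesis"
  then have "euclidean interior_of \<Union>(range F) = {}"
    using assms(1)
    by (intro Baire_category_alt) (auto simp: completely_metrizable_space_euclidean closed_closedin[symmetric])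
  then show False using assms(2) by simp
qed

lemma linear_approx_from_ball_in_closure:
  fixes T :: "'a::real_normed_vector \<Rightarrow> 'b::real_normed_vector"
  assumes T: "linear T" and ball: "ball p r \<subseteq> closure {x. norm (T x) \<le> C}"
    and z: "norm z < r * t" and t: "t > 0" and d: "d > 0"
  shows "\<exists>y. norm (T y) \<le> C * t \<and> norm (z - y) < d"
proof -
  interpret linear T by fact
  define w where "w = (1 / t) *\<^sub>R z"
  have "norm w < r" using z t by (simp add: w_def field_simps)
  then have "p + w \<in> closure {x. norm (T x) \<le> C}" "p - w \<in> closure {x. norm (T x) \<le> C}"
    using ball by (auto simp: dist_norm)
  then obtain s s' where s: "norm (T s) \<le> C" "dist s (p + w) < d / t"
    and s': "norm (T s') \<le> C" "dist s' (p - w) < d / t"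
    unfolding closure_approachable using d t by (metis divide_pos_pos mem_Collect_eq)
  \<comment> \<open>the two approximants are averaged so that the centre \<open>p\<close> cancels\<close>
  define y where "y = (t / 2) *\<^sub>R (s - s')"
  have "norm (T y) = (t / 2) * norm (T s - T s')" using t by (simp add: y_def scale diff)
  also have "\<dots> \<le> (t / 2) * (norm (T s) + norm (T s'))"
    using t by (intro mult_left_mono norm_triangle_ineq4) auto
  also have "\<dots> \<le> (t / 2) * (C + C)" using s(1) s'(1) t by (intro mult_left_mono add_mono) auto
  also have "\<dots> = C * t" by simp
  finally have Ty: "norm (T y) \<le> C * t" .
  have "z - y = (t / 2) *\<^sub>R ((p + w - s) - (p - w - s'))"
    using t by (simp add: y_def w_def algebra_simps) (metis scaleR_add_left field_sum_of_halves scaleR_one)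
  then have "norm (z - y) = (t / 2) * norm ((p + w - s) - (p - w - s'))" using t by simp
  also have "\<dots> \<le> (t / 2) * (norm (p + w - s) + norm (p - w - s'))"
    using t by (intro mult_left_mono norm_triangle_ineq4) auto
  also have "\<dots> < d" using s(2) s'(2) t by (simp add: dist_norm norm_minus_commute field_simps)
  finally show ?thesis using Ty by blast
qed

lemma closed_graph_bound_on_ball:
  fixes T :: "'a::banach \<Rightarrow> 'b::banach"
  assumes T: "linear T"
    and graph: "\<And>X a c. X \<longlonglongrightarrow> a \<Longrightarrow> (\<lambda>n. T (X n)) \<longlonglongrightarrow> c \<Longrightarrow> T a = c"
    and approx: "\<And>z t d. norm z < r * t \<Longrightarrow> t > 0 \<Longrightarrow> d > 0 \<Longrightarrow> \<exists>y. norm (T y) \<le> C * t \<and> norm (z - y) < d"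
    and x: "norm x < r"
  shows "norm (T x) \<le> 2 * C"
proof -
  interpret linear T by fact
  have r: "r > 0" using x by (metis norm_ge_zero le_less_trans)
  have "\<exists>y. norm z < r / 2^k \<longrightarrow> norm (T y) \<le> C / 2^k \<and> norm (z - y) < r / 2^Suc k" for z k
    using approx[of z "1 / 2^k" "r / 2^Suc k"] r by (auto simp: field_simps)
  then obtain Y where Y: "\<And>z k. norm z < r / 2^k \<Longrightarrow> norm (T (Y z k)) \<le> C / 2^k \<and> norm (z - Y z k) < r / 2^Suc k"
    by metis
  \<comment> \<open>\<open>x\<close> is the sum of the approximants \<open>y k\<close> of the residuals \<open>res k\<close>, so closedness of the
      graph makes \<open>T x\<close> the sum of the geometrically decaying \<open>T (y k)\<close>\<close>
  define res where "res = rec_nat x (\<lambda>k z. z - Y z k)"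
  define y where "y k = Y (res k) k" for k
  have res_0: "res 0 = x" and res_Suc: "res (Suc k) = res k - y k" for k
    by (simp_all add: res_def y_def)
  have res_small: "norm (res k) < r / 2^k" for k
  proof (induction k)
    case 0
    then show ?case using x res_0 by simp
  next
    case (Suc k)
    then show ?case using Y[OF Suc] res_Suc by (simp add: y_def)
  qed
  have Ty: "norm (T (y k)) \<le> C * (1/2)^k" for k using Y[OF res_small] by (simp add: y_def power_divide)
  have "(\<lambda>k. res k) \<longlonglongrightarrow> 0"
  proof (rule tendsto_norm_zero_cancel, rule Lim_null_comparison)
    show "\<forall>\<^sub>F k in sequentially. norm (norm (res k)) \<le> r * (1/2)^k"
      using res_small by (auto intro!: always_eventually less_imp_le simp: power_divide)
    show "(\<lambda>k. r * (1/2::real)^k) \<longlonglongrightarrow> 0"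
      by (intro tendsto_mult_right_zero LIMSEQ_realpow_zero) auto
  qed
  moreover have "(\<Sum>i<k. y i) = x - res k" for k
    by (induction k) (simp_all add: res_0 res_Suc)
  ultimately have partial_sums: "(\<lambda>k. \<Sum>i<k. y i) \<longlonglongrightarrow> x"
    using tendsto_diff[OF tendsto_const[of x], of res 0 sequentially] by simp
  have geometric: "summable (\<lambda>k. C * (1/2::real)^k)" by (intro summable_mult summable_geometric) auto
  then have "summable (\<lambda>k. T (y k))" using Ty by (intro summable_comparison_test'[OF geometric]) auto
  then have "(\<lambda>k. T (\<Sum>i<k. y i)) \<longlonglongrightarrow> (\<Sum>k. T (y k))"
    unfolding sum using summable_LIMSEQ by blast
  then have "T x = (\<Sum>k. T (y k))" by (rule graph[OF partial_sums])
  also have "norm \<dots> \<le> (\<Sum>k. C * (1/2::real)^k)"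
    using geometric Ty by (intro norm_suminf_le) auto
  also have "\<dots> = 2 * C" using suminf_geometric[of "1/2::real"] by (simp add: suminf_mult)
  finally show ?thesis .
qed

theorem closed_graph_imp_bounded_linear:
  fixes T :: "'a::banach \<Rightarrow> 'b::banach"
  assumes T: "linear T"
    and graph: "\<And>X a c. X \<longlonglongrightarrow> a \<Longrightarrow> (\<lambda>n. T (X n)) \<longlonglongrightarrow> c \<Longrightarrow> T a = c"
  shows "bounded_linear T"
proof -
  interpret linear T by fact
  define F where "F n = closure {x. norm (T x) \<le> real n}" for n
  have "x \<in> F (nat \<lceil>norm (T x)\<rceil>)" for x
    unfolding F_def by (rule closure_subset[THEN subsetD]) (simp add: real_nat_ceiling_ge)
  then have "(\<Union>n. F n) = UNIV" by blast
  then obtain n where "interior (F n) \<noteq> {}"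
    using Baire_interior_nonempty[of F] unfolding F_def by auto
  then obtain p r where r: "r > 0" "ball p r \<subseteq> F n"
    by (meson open_contains_ball open_interior interior_subset subset_trans ex_in_conv)
  have bound: "norm (T x) \<le> 2 * real n" if "norm x < r" for x
    using closed_graph_bound_on_ball[OF T graph linear_approx_from_ball_in_closure[OF T r(2)[unfolded F_def]] that] .
  show ?thesis
  proof (rule bounded_linear_intro[where K = "4 * real n / r"])
    show "norm (T x) \<le> norm x * (4 * real n / r)" for x
    proof (cases "x = 0")
      case True
      then show ?thesis by (simp add: zero)
    next
      case False
      define s where "s = r / (2 * norm x)"
      have s: "s > 0" "norm (s *\<^sub>R x) < r" using False r by (simp_all add: s_def)
      then have "s * norm (T x) \<le> 2 * real n" using bound[OF s(2)] by (simp add: scale)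
      then show ?thesis using False r s by (simp add: s_def field_simps)
    qed
  qed (simp_all add: add scale)
qed

section \<open>Banach quasi *-algebras and their forms\<close>

locale semisimple_banach_quasi_star_algebra =
  fixes sc :: "complex \<Rightarrow> 'a::banach \<Rightarrow> 'a"
    and A0 :: "'a set" and m :: "'a \<Rightarrow> 'a \<Rightarrow> 'a" and invl :: "'a \<Rightarrow> 'a" and u :: 'a
  assumes banach: "banach_quasi_star_algebra sc A0 m invl u"
    and semisimple: "star_semisimple UNIV A0 m sc invl norm"
begin

abbreviation forms :: "('a \<Rightarrow> 'a \<Rightarrow> complex) set" where
  "forms \<equiv> S_forms UNIV A0 m sc invl norm"

abbreviation Ab :: "'a set" where
  "Ab \<equiv> bounded_elems A0 m"

abbreviation wprod :: "'a \<Rightarrow> 'a \<Rightarrow> 'a" (infixl \<open>\<box>\<close> 70) where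
  "a \<box> b \<equiv> weak_prod A0 m sc invl a b"

lemma sc_of_real: "sc (complex_of_real r) x = r *\<^sub>R x"
  and sc_mult: "sc (c * d) x = sc c (sc d x)"
  and sc_add: "sc c (x + y) = sc c x + sc c y"
  and sc_one: "sc 1 x = x"
  and norm_sc: "norm (sc c x) = cmod c * norm x"
  using banach unfolding banach_quasi_star_algebra_def complex_banach_def by auto

lemma zero_A0: "0 \<in> A0"
  and add_A0: "x \<in> A0 \<Longrightarrow> y \<in> A0 \<Longrightarrow> x + y \<in> A0"
  and sc_A0: "x \<in> A0 \<Longrightarrow> sc c x \<in> A0"
  and m_A0: "x \<in> A0 \<Longrightarrow> y \<in> A0 \<Longrightarrow> m x y \<in> A0"
  and invl_A0: "x \<in> A0 \<Longrightarrow> invl x \<in> A0"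
  and invl_invl: "invl (invl a) = a"
  and invl_add: "invl (a + b) = invl a + invl b"
  and invl_sc: "invl (sc c a) = sc (cnj c) (invl a)"
  and m_distrib_right: "x \<in> A0 \<Longrightarrow> m (a + b) x = m a x + m b x"
  and m_distrib_left: "x \<in> A0 \<Longrightarrow> m x (a + b) = m x a + m x b"
  and m_distrib_left_A0: "x \<in> A0 \<Longrightarrow> y \<in> A0 \<Longrightarrow> m a (x + y) = m a x + m a y"
  and m_distrib_right_A0: "x \<in> A0 \<Longrightarrow> y \<in> A0 \<Longrightarrow> m (x + y) a = m x a + m y a"
  and m_sc_left: "x \<in> A0 \<Longrightarrow> m (sc c a) x = sc c (m a x)"
  and m_sc_right_A0: "x \<in> A0 \<Longrightarrow> m a (sc c x) = sc c (m a x)"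
  and m_sc_right: "x \<in> A0 \<Longrightarrow> m x (sc c a) = sc c (m x a)"
  and m_sc_left_A0: "x \<in> A0 \<Longrightarrow> m (sc c x) a = sc c (m x a)"
  and m_assoc_middle: "x \<in> A0 \<Longrightarrow> y \<in> A0 \<Longrightarrow> m (m x a) y = m x (m a y)"
  and m_assoc_left: "x \<in> A0 \<Longrightarrow> y \<in> A0 \<Longrightarrow> m a (m x y) = m (m a x) y"
  and m_assoc_right: "x \<in> A0 \<Longrightarrow> y \<in> A0 \<Longrightarrow> m (m x y) a = m x (m y a)"
  and invl_m: "x \<in> A0 \<Longrightarrow> invl (m a x) = m (invl x) (invl a)"
  and u_A0: "u \<in> A0"
  and m_unit_right: "m a u = a"
  using banach unfolding banach_quasi_star_algebra_def unital_quasi_star_algebra_def by auto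

lemma norm_invl: "norm (invl a) = norm a"
  and dense_A0: "closure A0 = UNIV"
  and continuous_m_right: "x \<in> A0 \<Longrightarrow> continuous_on UNIV (\<lambda>a. m a x)"
  using banach unfolding banach_quasi_star_algebra_def by auto

lemma bounded_linear_sc: "bounded_linear (sc z)"
proof (rule bounded_linear_intro[where K = "cmod z"])
  show "sc z (r *\<^sub>R x) = r *\<^sub>R sc z x" for r x
    by (metis sc_of_real sc_mult mult.commute)
qed (simp_all add: sc_add norm_sc mult.commute)

lemma subspace_A0: "subspace A0"
  unfolding subspace_def using zero_A0 add_A0 sc_A0[where c = "complex_of_real _"]
  by (simp add: sc_of_real)

lemma bounded_linear_invl: "bounded_linear invl"
proof (rule bounded_linear_intro[where K = 1])
  show "invl (r *\<^sub>R a) = r *\<^sub>R invl a" for r a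
    using invl_sc[of "complex_of_real r" a] by (simp add: sc_of_real)
qed (simp_all add: invl_add norm_invl)

lemma bounded_linear_m_right: "x \<in> A0 \<Longrightarrow> bounded_linear (\<lambda>a. m a x)"
  by (intro continuous_linear_imp_bounded_linear linearI continuous_m_right)
     (simp_all add: m_distrib_right m_sc_left[where c = "complex_of_real _", unfolded sc_of_real])

lemma m_via_invl: "x \<in> A0 \<Longrightarrow> m x a = invl (m (invl a) (invl x))"
  using invl_m[of "invl x" "invl a"] by (simp add: invl_A0 invl_invl)

lemma m_invl_via_invl: "x \<in> A0 \<Longrightarrow> m (invl a) x = invl (m (invl x) a)"
  using m_via_invl[OF invl_A0, of x a] by (simp add: invl_invl)

lemma bounded_linear_m_left: "x \<in> A0 \<Longrightarrow> bounded_linear (\<lambda>a. m x a)"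
  using bounded_linear_compose[OF bounded_linear_invl
      bounded_linear_compose[OF bounded_linear_m_right[OF invl_A0] bounded_linear_invl]]
  by (simp add: m_via_invl)

lemma linear_on_m_left: "linear_on A0 (m a)"
  by (intro linear_onI)
     (simp_all add: m_distrib_left_A0 m_sc_right_A0[where c = "complex_of_real _", unfolded sc_of_real])

lemma linear_on_m_right: "linear_on A0 (\<lambda>x. m x a)"
  by (intro linear_onI)
     (simp_all add: m_distrib_right_A0 m_sc_left_A0[where c = "complex_of_real _", unfolded sc_of_real])

lemma form_add_left: "\<phi> \<in> forms \<Longrightarrow> \<phi> (a + b) c = \<phi> a c + \<phi> b c"
  and form_add_right: "\<phi> \<in> forms \<Longrightarrow> \<phi> c (a + b) = \<phi> c a + \<phi> c b"
  and form_sc_left: "\<phi> \<in> forms \<Longrightarrow> \<phi> (sc z a) b = z * \<phi> a b"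
  and form_sc_right: "\<phi> \<in> forms \<Longrightarrow> \<phi> a (sc z b) = cnj z * \<phi> a b"
  and form_nonneg: "\<phi> \<in> forms \<Longrightarrow> 0 \<le> \<phi> a a"
  and form_bound: "\<phi> \<in> forms \<Longrightarrow> cmod (\<phi> a b) \<le> norm a * norm b"
  and form_invariant: "\<phi> \<in> forms \<Longrightarrow> x \<in> A0 \<Longrightarrow> y \<in> A0 \<Longrightarrow> \<phi> (m a x) y = \<phi> x (m (invl a) y)"
  unfolding S_forms_def sesquilinear_on_def by auto

lemma bounded_linear_form_left: "\<phi> \<in> forms \<Longrightarrow> bounded_linear (\<lambda>a. \<phi> a b)"
  by (rule bounded_linear_intro[where K = "norm b"])
     (simp_all add: form_add_left form_bound form_sc_left[of _ "complex_of_real _", unfolded sc_of_real]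
       scaleR_conv_of_real)

lemma bounded_linear_form_right:
  assumes "\<phi> \<in> forms" shows "bounded_linear (\<lambda>b. \<phi> a b)"
proof (rule bounded_linear_intro[where K = "norm a"])
  show "norm (\<phi> a b) \<le> norm b * norm a" for b
    using form_bound[OF assms, of a b] by (simp add: mult.commute)
qed (use assms in \<open>simp_all add: form_add_right scaleR_conv_of_real
      form_sc_right[of _ _ "complex_of_real _", unfolded sc_of_real]\<close>)

lemma form_invariant_A0:
  assumes "\<phi> \<in> forms" "x \<in> A0" "y \<in> A0"
  shows "\<phi> (m x a) y = \<phi> a (m (invl x) y)"
  by (rule bounded_linear_eq_on_dense[OF dense_A0, of "\<lambda>a. \<phi> (m x a) y" "\<lambda>a. \<phi> a (m (invl x) y)"])
     (use assms in \<open>auto intro: bounded_linear_compose[OF bounded_linear_form_left bounded_linear_m_left]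
        bounded_linear_form_left simp: form_invariant\<close>)

text \<open>This is where the *-semisimplicity of \<open>A\<close> is used.\<close>

lemma forms_separate:
  assumes "\<And>\<phi> y. \<phi> \<in> forms \<Longrightarrow> y \<in> A0 \<Longrightarrow> \<phi> c y = \<phi> c' y"
  shows "c = c'"
proof -
  have "\<phi> (c - c') (c - c') = 0" if \<phi>: "\<phi> \<in> forms" for \<phi>
  proof (rule bounded_linear_eq_on_dense[OF dense_A0, of "\<lambda>y. \<phi> (c - c') y" "\<lambda>y. 0"])
    show "\<phi> (c - c') y = 0" if "y \<in> A0" for y
      using assms[OF \<phi> that] linear_simps(2)[OF bounded_linear_form_left[OF \<phi>], of c c' y] by simp
  qed (simp_all add: bounded_linear_form_right[OF \<phi>] bounded_linear_zero)
  then have "c - c' = 0" using semisimple unfolding star_semisimple_def by blast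
  then show ?thesis by simp
qed

lemma form_of_weak_prod:
  "is_weak_prod A0 m sc invl a b c \<Longrightarrow> \<phi> \<in> forms \<Longrightarrow> y \<in> A0 \<Longrightarrow> \<phi> c y = \<phi> b (m (invl a) y)"
  unfolding is_weak_prod_def using u_A0 by (metis m_unit_right)

lemma weak_prod_eqI: "is_weak_prod A0 m sc invl a b c \<Longrightarrow> a \<box> b = c"
  unfolding weak_prod_def
  by (rule the_equality) (auto intro!: forms_separate simp: form_of_weak_prod)

lemma is_weak_prod_A0_left: "x \<in> A0 \<Longrightarrow> is_weak_prod A0 m sc invl x b (m x b)"
  unfolding is_weak_prod_def by (simp add: m_assoc_middle form_invariant_A0)

lemma is_weak_prod_A0_right: "x \<in> A0 \<Longrightarrow> is_weak_prod A0 m sc invl b x (m b x)"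
  unfolding is_weak_prod_def by (simp add: m_assoc_left[symmetric] form_invariant m_A0)

section \<open>The Banach *-algebra of bounded elements\<close>

abbreviation lmult :: "'a \<Rightarrow> 'a \<Rightarrow> 'a" where
  "lmult a \<equiv> dense_extension A0 (m a)"

abbreviation rmult :: "'a \<Rightarrow> 'a \<Rightarrow> 'a" where
  "rmult a \<equiv> dense_extension A0 (\<lambda>x. m x a)"

lemma bounded_linear_lmult: "a \<in> Ab \<Longrightarrow> bounded_linear (lmult a)"
  and lmult_A0: "a \<in> Ab \<Longrightarrow> x \<in> A0 \<Longrightarrow> lmult a x = m a x"
  using dense_extension[OF dense_A0 subspace_A0 linear_on_m_left, of a]
  unfolding bounded_elems_def by auto

lemma bounded_linear_rmult: "a \<in> Ab \<Longrightarrow> bounded_linear (rmult a)"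
  and rmult_A0: "a \<in> Ab \<Longrightarrow> x \<in> A0 \<Longrightarrow> rmult a x = m x a"
  using dense_extension[OF dense_A0 subspace_A0 linear_on_m_right, of a]
  unfolding bounded_elems_def by auto

lemma is_weak_prod_bounded_left:
  assumes a: "a \<in> Ab" shows "is_weak_prod A0 m sc invl a b (lmult a b)"
  unfolding is_weak_prod_def
proof (intro ballI)
  fix \<phi> x y assume \<phi>: "\<phi> \<in> forms" and x: "x \<in> A0" and y: "y \<in> A0"
  show "\<phi> (m b x) (m (invl a) y) = \<phi> (m (lmult a b) x) y"
  proof (rule bounded_linear_eq_on_dense[OF dense_A0, of "\<lambda>b. \<phi> (m b x) (m (invl a) y)"])
    show "\<phi> (m b x) (m (invl a) y) = \<phi> (m (lmult a b) x) y" if "b \<in> A0" for b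
      using is_weak_prod_A0_right[OF that, of a] \<phi> x y
      unfolding is_weak_prod_def by (simp add: lmult_A0[OF a that])
  qed (intro bounded_linear_compose[OF bounded_linear_form_left[OF \<phi>]] bounded_linear_m_right x
      bounded_linear_compose[OF bounded_linear_m_right[OF x] bounded_linear_lmult[OF a]])+
qed

lemma is_weak_prod_bounded_right:
  assumes b: "b \<in> Ab" shows "is_weak_prod A0 m sc invl a b (rmult b a)"
  unfolding is_weak_prod_def
proof (intro ballI)
  fix \<phi> x y assume \<phi>: "\<phi> \<in> forms" and x: "x \<in> A0" and y: "y \<in> A0"
  show "\<phi> (m b x) (m (invl a) y) = \<phi> (m (rmult b a) x) y"
  proof (rule bounded_linear_eq_on_dense[OF dense_A0, of "\<lambda>a. \<phi> (m b x) (m (invl a) y)"])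
    show "\<phi> (m b x) (m (invl a) y) = \<phi> (m (rmult b a) x) y" if "a \<in> A0" for a
      using is_weak_prod_A0_left[OF that, of b] \<phi> x y
      unfolding is_weak_prod_def by (simp add: rmult_A0[OF b that])
  qed (intro bounded_linear_compose[OF bounded_linear_form_right[OF \<phi>]]
      bounded_linear_compose[OF bounded_linear_form_left[OF \<phi>]]
      bounded_linear_compose[OF bounded_linear_m_right[OF y] bounded_linear_invl]
      bounded_linear_compose[OF bounded_linear_m_right[OF x] bounded_linear_rmult[OF b]])+
qed

lemma wprod_bounded_left: "a \<in> Ab \<Longrightarrow> a \<box> b = lmult a b"
  by (rule weak_prod_eqI[OF is_weak_prod_bounded_left])

lemma wprod_bounded_right: "b \<in> Ab \<Longrightarrow> a \<box> b = rmult b a"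
  by (rule weak_prod_eqI[OF is_weak_prod_bounded_right])

lemma m_wprod_right:
  assumes a: "a \<in> Ab" and x: "x \<in> A0" shows "m (a \<box> b) x = lmult a (m b x)"
  unfolding wprod_bounded_left[OF a]
proof (rule bounded_linear_eq_on_dense[OF dense_A0, of "\<lambda>b. m (lmult a b) x"])
  show "m (lmult a b) x = lmult a (m b x)" if "b \<in> A0" for b
    using that x by (simp add: lmult_A0[OF a] m_A0 m_assoc_left)
qed (intro bounded_linear_compose[OF bounded_linear_m_right] bounded_linear_compose[OF bounded_linear_lmult]
    bounded_linear_lmult bounded_linear_m_right a x)+

lemma m_wprod_left:
  assumes b: "b \<in> Ab" and x: "x \<in> A0" shows "m x (a \<box> b) = rmult b (m x a)"
  unfolding wprod_bounded_right[OF b]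
proof (rule bounded_linear_eq_on_dense[OF dense_A0, of "\<lambda>a. m x (rmult b a)"])
  show "m x (rmult b a) = rmult b (m x a)" if "a \<in> A0" for a
    using that x by (simp add: rmult_A0[OF b] m_A0 m_assoc_right)
qed (intro bounded_linear_compose[OF bounded_linear_m_left] bounded_linear_compose[OF bounded_linear_rmult]
    bounded_linear_rmult bounded_linear_m_left b x)+

lemma bnorm_eq: "bnorm A0 m a = max (onorm_on A0 (m a)) (onorm_on A0 (\<lambda>x. m x a))"
  by (simp add: bnorm_def onorm_on_def)

lemma bounded_elems_bounds:
  assumes "a \<in> Ab"
  shows "\<exists>K. \<forall>x\<in>A0. norm (m a x) \<le> K * norm x" "\<exists>K. \<forall>x\<in>A0. norm (m x a) \<le> K * norm x"
  using assms unfolding bounded_elems_def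
  by (simp_all add: linear_on_continuous_on_iff_bounded[OF subspace_A0 linear_on_m_left, symmetric]
      linear_on_continuous_on_iff_bounded[OF subspace_A0 linear_on_m_right, symmetric])

lemma norm_m_le_bnorm:
  assumes "a \<in> Ab" "x \<in> A0"
  shows "norm (m a x) \<le> bnorm A0 m a * norm x" "norm (m x a) \<le> bnorm A0 m a * norm x"
proof -
  obtain K K' where "\<forall>x\<in>A0. norm (m a x) \<le> K * norm x" "\<forall>x\<in>A0. norm (m x a) \<le> K' * norm x"
    using bounded_elems_bounds[OF assms(1)] by blast
  then have "norm (m a x) \<le> onorm_on A0 (m a) * norm x" "norm (m x a) \<le> onorm_on A0 (\<lambda>x. m x a) * norm x"
    using norm_le_onorm_on[OF subspace_A0 linear_on_m_left, of a K x]
      norm_le_onorm_on[OF subspace_A0 linear_on_m_right, of a K' x] assms(2) by auto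
  then show "norm (m a x) \<le> bnorm A0 m a * norm x" "norm (m x a) \<le> bnorm A0 m a * norm x"
    unfolding bnorm_eq by (meson max.cobounded1 max.cobounded2 mult_right_mono norm_ge_zero order_trans)+
qed

lemma bnorm_nonneg: "a \<in> Ab \<Longrightarrow> 0 \<le> bnorm A0 m a"
  using bounded_elems_bounds(1) onorm_on_nonneg[OF subspace_A0 linear_on_m_left]
  unfolding bnorm_eq by (metis max.coboundedI1)

lemma bounded_elems_bnorm_leI:
  assumes "0 \<le> e" and "\<And>x. x \<in> A0 \<Longrightarrow> norm (m a x) \<le> e * norm x"
    and "\<And>x. x \<in> A0 \<Longrightarrow> norm (m x a) \<le> e * norm x"
  shows "a \<in> Ab" "bnorm A0 m a \<le> e"
  using assms unfolding bounded_elems_def bnorm_eq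
  by (auto simp: linear_on_continuous_on_iff_bounded[OF subspace_A0 linear_on_m_left]
      linear_on_continuous_on_iff_bounded[OF subspace_A0 linear_on_m_right] intro!: onorm_on_le zero_A0)

lemma norm_le_bnorm: "a \<in> Ab \<Longrightarrow> norm a \<le> bnorm A0 m a * norm u"
  using norm_m_le_bnorm(1)[OF _ u_A0] by (simp add: m_unit_right)

lemma norm_lmult_le: "a \<in> Ab \<Longrightarrow> norm (lmult a z) \<le> bnorm A0 m a * norm z"
  by (rule continuous_le_on_dense[OF dense_A0, of "\<lambda>z. norm (lmult a z)"])
     (auto intro!: continuous_intros linear_continuous_on[OF bounded_linear_lmult] simp: lmult_A0 norm_m_le_bnorm)

lemma norm_rmult_le: "a \<in> Ab \<Longrightarrow> norm (rmult a z) \<le> bnorm A0 m a * norm z"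
  by (rule continuous_le_on_dense[OF dense_A0, of "\<lambda>z. norm (rmult a z)"])
     (auto intro!: continuous_intros linear_continuous_on[OF bounded_linear_rmult] simp: rmult_A0 norm_m_le_bnorm)

lemma bounded_elems_zero: "0 \<in> Ab" "bnorm A0 m 0 \<le> 0"
  using bounded_elems_bnorm_leI[of 0 0]
  by (simp_all add: linear_simps(3)[OF bounded_linear_m_right] linear_simps(3)[OF bounded_linear_m_left])

lemma bounded_elems_add:
  assumes a: "a \<in> Ab" and b: "b \<in> Ab"
  shows "a + b \<in> Ab" "bnorm A0 m (a + b) \<le> bnorm A0 m a + bnorm A0 m b"
proof -
  have bounds: "norm (m (a + b) x) \<le> (bnorm A0 m a + bnorm A0 m b) * norm x"
    "norm (m x (a + b)) \<le> (bnorm A0 m a + bnorm A0 m b) * norm x" if x: "x \<in> A0" for x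
    using x by (simp_all add: m_distrib_right m_distrib_left distrib_right)
      (intro norm_triangle_mono norm_m_le_bnorm a b x)+
  have nonneg: "0 \<le> bnorm A0 m a + bnorm A0 m b" using bnorm_nonneg[OF a] bnorm_nonneg[OF b] by simp
  show "a + b \<in> Ab" "bnorm A0 m (a + b) \<le> bnorm A0 m a + bnorm A0 m b"
    using bounded_elems_bnorm_leI[OF nonneg bounds] by simp_all
qed

lemma bounded_elems_sc:
  assumes a: "a \<in> Ab"
  shows "sc z a \<in> Ab" "bnorm A0 m (sc z a) \<le> cmod z * bnorm A0 m a"
proof -
  have bounds: "norm (m (sc z a) x) \<le> cmod z * bnorm A0 m a * norm x"
    "norm (m x (sc z a)) \<le> cmod z * bnorm A0 m a * norm x" if x: "x \<in> A0" for x
    using x norm_m_le_bnorm[OF a x]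
    by (simp_all add: m_sc_left m_sc_right norm_sc mult.assoc mult_left_mono)
  have nonneg: "0 \<le> cmod z * bnorm A0 m a" using bnorm_nonneg[OF a] by simp
  show "sc z a \<in> Ab" "bnorm A0 m (sc z a) \<le> cmod z * bnorm A0 m a"
    using bounded_elems_bnorm_leI[OF nonneg bounds] by simp_all
qed

lemma bounded_elems_invl:
  assumes a: "a \<in> Ab"
  shows "invl a \<in> Ab" "bnorm A0 m (invl a) \<le> bnorm A0 m a"
proof -
  have bounds: "norm (m (invl a) x) \<le> bnorm A0 m a * norm x"
    "norm (m x (invl a)) \<le> bnorm A0 m a * norm x" if x: "x \<in> A0" for x
    using norm_m_le_bnorm[OF a invl_A0[OF x]] x
    by (simp_all add: m_invl_via_invl m_via_invl[of x] invl_invl norm_invl)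
  show "invl a \<in> Ab" "bnorm A0 m (invl a) \<le> bnorm A0 m a"
    using bounded_elems_bnorm_leI[OF bnorm_nonneg[OF a] bounds] by simp_all
qed

lemma bounded_elems_wprod:
  assumes a: "a \<in> Ab" and b: "b \<in> Ab"
  shows "a \<box> b \<in> Ab" "bnorm A0 m (a \<box> b) \<le> bnorm A0 m a * bnorm A0 m b"
proof -
  have left: "norm (m (a \<box> b) x) \<le> bnorm A0 m a * bnorm A0 m b * norm x" if x: "x \<in> A0" for x
  proof -
    have "norm (m (a \<box> b) x) \<le> bnorm A0 m a * norm (m b x)"
      unfolding m_wprod_right[OF a x] by (rule norm_lmult_le[OF a])
    also have "\<dots> \<le> bnorm A0 m a * (bnorm A0 m b * norm x)"
      by (intro mult_left_mono norm_m_le_bnorm b x bnorm_nonneg a)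
    finally show ?thesis by (simp add: mult.assoc)
  qed
  have right: "norm (m x (a \<box> b)) \<le> bnorm A0 m a * bnorm A0 m b * norm x" if x: "x \<in> A0" for x
  proof -
    have "norm (m x (a \<box> b)) \<le> bnorm A0 m b * norm (m x a)"
      unfolding m_wprod_left[OF b x] by (rule norm_rmult_le[OF b])
    also have "\<dots> \<le> bnorm A0 m b * (bnorm A0 m a * norm x)"
      by (intro mult_left_mono norm_m_le_bnorm a x bnorm_nonneg b)
    finally show ?thesis by (simp add: mult_ac)
  qed
  have nonneg: "0 \<le> bnorm A0 m a * bnorm A0 m b" using bnorm_nonneg[OF a] bnorm_nonneg[OF b] by simp
  show "a \<box> b \<in> Ab" "bnorm A0 m (a \<box> b) \<le> bnorm A0 m a * bnorm A0 m b"
    using bounded_elems_bnorm_leI[OF nonneg left right] by simp_all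
qed

lemma subspace_bounded_elems: "subspace Ab"
  unfolding subspace_def
  using bounded_elems_zero(1) bounded_elems_add(1) bounded_elems_sc(1)[where z = "complex_of_real _"]
  by (simp add: sc_of_real)

lemma bnorm_sc:
  assumes a: "a \<in> Ab" shows "bnorm A0 m (sc z a) = cmod z * bnorm A0 m a"
proof (cases "z = 0")
  case True
  then have "sc z a = 0" using sc_of_real[of 0 a] by simp
  then show ?thesis using True bounded_elems_zero bnorm_nonneg[of 0] by simp
next
  case False
  have "sc (inverse z) (sc z a) = a" using False by (simp add: sc_mult[symmetric] sc_one)
  then have "bnorm A0 m a \<le> cmod (inverse z) * bnorm A0 m (sc z a)"
    using bounded_elems_sc(2)[OF bounded_elems_sc(1)[OF a, of z], of "inverse z"] by simp
  then have "cmod z * bnorm A0 m a \<le> cmod z * (cmod (inverse z) * bnorm A0 m (sc z a))"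
    by (intro mult_left_mono) auto
  also have "\<dots> = bnorm A0 m (sc z a)" using False by (simp add: norm_inverse)
  finally have "cmod z * bnorm A0 m a \<le> bnorm A0 m (sc z a)" .
  then show ?thesis using bounded_elems_sc(2)[OF a, of z] by linarith
qed

lemma bnorm_invl:
  assumes a: "a \<in> Ab" shows "bnorm A0 m (invl a) = bnorm A0 m a"
  using bounded_elems_invl(2)[OF a] bounded_elems_invl(2)[OF bounded_elems_invl(1)[OF a]] unfolding invl_invl by linarith

lemma bnorm_eq_0_iff: "a \<in> Ab \<Longrightarrow> bnorm A0 m a = 0 \<longleftrightarrow> a = 0"
  using norm_le_bnorm[of a] bounded_elems_zero bnorm_nonneg[of 0] by auto

lemma wprod_assoc:
  assumes a: "a \<in> Ab" and b: "b \<in> Ab" and c: "c \<in> Ab"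
  shows "(a \<box> b) \<box> c = a \<box> (b \<box> c)"
proof -
  have ab: "a \<box> b \<in> Ab" by (rule bounded_elems_wprod(1)[OF a b])
  have "(a \<box> b) \<box> c = lmult (a \<box> b) c" by (rule wprod_bounded_left[OF ab])
  also have "\<dots> = lmult a (lmult b c)"
  proof (rule bounded_linear_eq_on_dense[OF dense_A0, of "lmult (a \<box> b)"])
    show "lmult (a \<box> b) x = lmult a (lmult b x)" if "x \<in> A0" for x
      using that by (simp add: lmult_A0[OF ab] lmult_A0[OF b] m_wprod_right[OF a])
  qed (intro bounded_linear_lmult ab bounded_linear_compose[OF bounded_linear_lmult[OF a] bounded_linear_lmult[OF b]])+
  also have "\<dots> = a \<box> (b \<box> c)" by (simp add: wprod_bounded_left a b)
  finally show ?thesis .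
qed

lemma wprod_add_left: "c \<in> Ab \<Longrightarrow> (a + b) \<box> c = a \<box> c + b \<box> c"
  by (simp add: wprod_bounded_right linear_simps(1)[OF bounded_linear_rmult])

lemma wprod_add_right: "a \<in> Ab \<Longrightarrow> a \<box> (b + c) = a \<box> b + a \<box> c"
  by (simp add: wprod_bounded_left linear_simps(1)[OF bounded_linear_lmult])

lemma wprod_sc_left:
  assumes b: "b \<in> Ab" shows "sc z a \<box> b = sc z (a \<box> b)"
  unfolding wprod_bounded_right[OF b]
proof (rule bounded_linear_eq_on_dense[OF dense_A0, of "\<lambda>a. rmult b (sc z a)"])
  show "rmult b (sc z a) = sc z (rmult b a)" if "a \<in> A0" for a
    using that by (simp add: rmult_A0[OF b] sc_A0 m_sc_left_A0)
qed (intro bounded_linear_compose[OF bounded_linear_rmult[OF b] bounded_linear_sc]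
    bounded_linear_compose[OF bounded_linear_sc bounded_linear_rmult[OF b]])+

lemma wprod_sc_right:
  assumes a: "a \<in> Ab" shows "a \<box> sc z b = sc z (a \<box> b)"
  unfolding wprod_bounded_left[OF a]
proof (rule bounded_linear_eq_on_dense[OF dense_A0, of "\<lambda>b. lmult a (sc z b)"])
  show "lmult a (sc z b) = sc z (lmult a b)" if "b \<in> A0" for b
    using that by (simp add: lmult_A0[OF a] sc_A0 m_sc_right_A0)
qed (intro bounded_linear_compose[OF bounded_linear_lmult[OF a] bounded_linear_sc]
    bounded_linear_compose[OF bounded_linear_sc bounded_linear_lmult[OF a]])+

lemma invl_wprod:
  assumes a: "a \<in> Ab" shows "invl (a \<box> b) = invl b \<box> invl a"
proof -
  have ia: "invl a \<in> Ab" by (rule bounded_elems_invl(1)[OF a])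
  have "invl (lmult a b) = rmult (invl a) (invl b)"
  proof (rule bounded_linear_eq_on_dense[OF dense_A0, of "\<lambda>b. invl (lmult a b)"])
    show "invl (lmult a b) = rmult (invl a) (invl b)" if "b \<in> A0" for b
      using that by (simp add: lmult_A0[OF a] rmult_A0[OF ia] invl_A0 invl_m)
  qed (intro bounded_linear_compose[OF bounded_linear_invl bounded_linear_lmult[OF a]]
      bounded_linear_compose[OF bounded_linear_rmult[OF ia] bounded_linear_invl])+
  then show ?thesis by (simp add: wprod_bounded_left[OF a] wprod_bounded_right[OF ia])
qed

lemma bnorm_le_limit:
  assumes Y: "\<And>k. Y k \<in> Ab" and e: "0 \<le> e"
    and bound: "\<forall>\<^sub>F k in sequentially. bnorm A0 m (Y k) \<le> e" and lim: "Y \<longlonglongrightarrow> y"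
  shows "y \<in> Ab" "bnorm A0 m y \<le> e"
proof -
  have "norm (m y x) \<le> e * norm x \<and> norm (m x y) \<le> e * norm x" if x: "x \<in> A0" for x
  proof -
    have le: "norm (m (Y k) x) \<le> e * norm x" "norm (m x (Y k)) \<le> e * norm x"
      if "bnorm A0 m (Y k) \<le> e" for k
      using norm_m_le_bnorm[OF Y x, of k] mult_right_mono[OF that norm_ge_zero[of x]] by linarith+
    have "\<forall>\<^sub>F k in sequentially. norm (m (Y k) x) \<le> e * norm x"
      by (rule eventually_mono[OF bound le(1)])
    moreover have "\<forall>\<^sub>F k in sequentially. norm (m x (Y k)) \<le> e * norm x"
      by (rule eventually_mono[OF bound le(2)])
    moreover have "(\<lambda>k. norm (m (Y k) x)) \<longlonglongrightarrow> norm (m y x)" "(\<lambda>k. norm (m x (Y k))) \<longlonglongrightarrow> norm (m x y)"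
      by (intro tendsto_norm bounded_linear.tendsto[OF bounded_linear_m_right[OF x] lim]
          bounded_linear.tendsto[OF bounded_linear_m_left[OF x] lim])+
    ultimately show ?thesis using tendsto_upperbound trivial_limit_sequentially by blast
  qed
  then show "y \<in> Ab" "bnorm A0 m y \<le> e"
    using bounded_elems_bnorm_leI[OF e] by blast+
qed

lemma bnorm_Cauchy_imp_Cauchy:
  assumes X: "\<And>n. X n \<in> Ab" and Cauchy: "\<forall>e>0. \<exists>N. \<forall>k\<ge>N. \<forall>n\<ge>N. bnorm A0 m (X k - X n) < e"
  shows "Cauchy X"
proof (rule metric_CauchyI)
  fix e :: real assume "e > 0"
  then obtain N where N: "\<And>k n. k \<ge> N \<Longrightarrow> n \<ge> N \<Longrightarrow> bnorm A0 m (X k - X n) < e / (norm u + 1)"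
    using Cauchy by (metis divide_pos_pos norm_ge_zero add_nonneg_pos zero_less_one)
  have u: "0 < norm u + 1" by (intro add_nonneg_pos) auto
  have "dist (X k) (X n) < e" if "k \<ge> N" "n \<ge> N" for k n
  proof -
    have diff: "X k - X n \<in> Ab" by (rule subspace_diff[OF subspace_bounded_elems X X])
    have "dist (X k) (X n) \<le> bnorm A0 m (X k - X n) * norm u"
      using norm_le_bnorm[OF diff] by (simp add: dist_norm)
    also have "\<dots> \<le> bnorm A0 m (X k - X n) * (norm u + 1)"
      using bnorm_nonneg[OF diff] by (intro mult_left_mono) auto
    also have "\<dots> < e" using N[OF that] u by (simp add: pos_less_divide_eq)
    finally show ?thesis .
  qed
  then show "\<exists>M. \<forall>k\<ge>M. \<forall>n\<ge>M. dist (X k) (X n) < e" by blast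
qed

lemma bounded_elems_complete:
  assumes X: "\<And>n. X n \<in> Ab" and Cauchy: "\<forall>e>0. \<exists>N. \<forall>k\<ge>N. \<forall>n\<ge>N. bnorm A0 m (X k - X n) < e"
  shows "\<exists>l\<in>Ab. (\<lambda>n. bnorm A0 m (X n - l)) \<longlonglongrightarrow> 0"
proof -
  obtain l where l: "X \<longlonglongrightarrow> l"
    using bnorm_Cauchy_imp_Cauchy[OF X Cauchy] Cauchy_convergent_iff convergent_def by blast
  have diff: "X n - X k \<in> Ab" for n k by (rule subspace_diff[OF subspace_bounded_elems X X])
  have tail: "\<exists>N. \<forall>n\<ge>N. X n - l \<in> Ab \<and> bnorm A0 m (X n - l) \<le> e" if "e > 0" for e
  proof -
    obtain N where N: "\<And>k n. k \<ge> N \<Longrightarrow> n \<ge> N \<Longrightarrow> bnorm A0 m (X n - X k) < e"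
      using Cauchy \<open>e > 0\<close> by metis
    have "X n - l \<in> Ab \<and> bnorm A0 m (X n - l) \<le> e" if "n \<ge> N" for n
    proof -
      have "\<forall>\<^sub>F k in sequentially. bnorm A0 m (X n - X k) \<le> e"
        unfolding eventually_sequentially using N[OF _ that] less_imp_le by blast
      moreover have "(\<lambda>k. X n - X k) \<longlonglongrightarrow> X n - l" by (intro tendsto_diff tendsto_const l)
      ultimately show ?thesis
        using bnorm_le_limit[of "\<lambda>k. X n - X k", OF diff less_imp_le[OF \<open>e > 0\<close>]] by blast
    qed
    then show ?thesis by blast
  qed
  obtain N where "X N - l \<in> Ab" using tail[of 1] by auto
  then have l_Ab: "l \<in> Ab" using subspace_diff[OF subspace_bounded_elems X[of N]] by force
  have "(\<lambda>n. bnorm A0 m (X n - l)) \<longlonglongrightarrow> 0"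
  proof (rule LIMSEQ_I)
    fix r :: real assume "r > 0"
    then obtain N where "\<forall>n\<ge>N. X n - l \<in> Ab \<and> bnorm A0 m (X n - l) \<le> r / 2" using tail[of "r / 2"] by auto
    then show "\<exists>N. \<forall>n\<ge>N. norm (bnorm A0 m (X n - l) - 0) < r" using \<open>r > 0\<close> bnorm_nonneg by force
  qed
  then show ?thesis using l_Ab by blast
qed

lemma form_wprod_invariant:
  assumes \<phi>: "\<phi> \<in> forms" and a: "a \<in> Ab"
  shows "\<phi> (a \<box> b) c = \<phi> b (invl a \<box> c)"
proof -
  have ia: "invl a \<in> Ab" by (rule bounded_elems_invl(1)[OF a])
  have on_A0: "\<phi> (lmult a b) y = \<phi> b (lmult (invl a) y)" if y: "y \<in> A0" for b y
  proof (rule bounded_linear_eq_on_dense[OF dense_A0, of "\<lambda>b. \<phi> (lmult a b) y"])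
    show "\<phi> (lmult a x) y = \<phi> x (lmult (invl a) y)" if "x \<in> A0" for x
      using that y \<phi> by (simp add: lmult_A0[OF a] lmult_A0[OF ia] form_invariant)
  qed (intro bounded_linear_compose[OF bounded_linear_form_left[OF \<phi>] bounded_linear_lmult[OF a]]
      bounded_linear_form_left[OF \<phi>])+
  have "\<phi> (lmult a b) c = \<phi> b (lmult (invl a) c)"
    by (rule bounded_linear_eq_on_dense[OF dense_A0, of "\<lambda>c. \<phi> (lmult a b) c"])
       ((intro bounded_linear_form_right[OF \<phi>]
          bounded_linear_compose[OF bounded_linear_form_right[OF \<phi>] bounded_linear_lmult[OF ia]])+, rule on_A0)
  then show ?thesis by (simp add: wprod_bounded_left[OF a] wprod_bounded_left[OF ia])
qed

text \<open>Dividing by \<open>M\<^sup>2\<close> compensates for \<open>norm a \<le> bnorm A0 m a * norm u\<close>.\<close>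

lemma scaled_form_in_S_forms_bounded_elems:
  fixes M :: real
  assumes \<phi>: "\<phi> \<in> forms" and M: "0 < M" "norm u \<le> M"
  shows "(\<lambda>x y. \<phi> x y / complex_of_real (M\<^sup>2)) \<in> S_forms Ab Ab (\<box>) sc invl (bnorm A0 m)"
  unfolding S_forms_def sesquilinear_on_def mem_Collect_eq
proof (intro conjI ballI allI)
  fix x y assume x: "x \<in> Ab" and y: "y \<in> Ab"
  have "norm x \<le> bnorm A0 m x * M" "norm y \<le> bnorm A0 m y * M"
    using norm_le_bnorm[OF x] norm_le_bnorm[OF y] M(2) bnorm_nonneg[OF x] bnorm_nonneg[OF y]
    by (meson mult_left_mono order_trans)+
  then have "cmod (\<phi> x y) \<le> (bnorm A0 m x * M) * (bnorm A0 m y * M)"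
    using form_bound[OF \<phi>, of x y] by (meson mult_mono norm_ge_zero order_trans)
  moreover have "0 < M\<^sup>2" using M(1) by simp
  moreover have "cmod (\<phi> x y / complex_of_real (M\<^sup>2)) = cmod (\<phi> x y) / M\<^sup>2"
    by (simp only: norm_divide norm_of_real abs_power2)
  ultimately show "cmod (\<phi> x y / complex_of_real (M\<^sup>2)) \<le> bnorm A0 m x * bnorm A0 m y"
    by (simp add: pos_divide_le_eq power2_eq_square mult_ac)
next
  fix x assume "x \<in> Ab"
  show "0 \<le> \<phi> x x / complex_of_real (M\<^sup>2)"
    using form_nonneg[OF \<phi>, of x] M(1)
    by (simp add: less_eq_complex_def Re_divide_of_real Im_divide_of_real)
next
  fix b x y assume "b \<in> Ab"
  then show "\<phi> (b \<box> x) y / complex_of_real (M\<^sup>2) = \<phi> x (invl b \<box> y) / complex_of_real (M\<^sup>2)"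
    by (simp add: form_wprod_invariant[OF \<phi>])
qed (simp_all add: form_add_left[OF \<phi>] form_add_right[OF \<phi>] form_sc_left[OF \<phi>] form_sc_right[OF \<phi>]
    add_divide_distrib)

lemma bounded_elems_star_semisimple: "star_semisimple Ab Ab (\<box>) sc invl (bnorm A0 m)"
  unfolding star_semisimple_def
proof (intro ballI impI)
  fix a assume a: "a \<in> Ab" and null: "\<forall>\<psi>\<in>S_forms Ab Ab (\<box>) sc invl (bnorm A0 m). \<psi> a a = 0"
  define M where "M = norm u + 1"
  have M: "0 < M" "norm u \<le> M" unfolding M_def by (intro add_nonneg_pos) auto
  have "\<phi> a a = 0" if "\<phi> \<in> forms" for \<phi>
  proof -
    have "(\<lambda>x y. \<phi> x y / complex_of_real (M\<^sup>2)) \<in> S_forms Ab Ab (\<box>) sc invl (bnorm A0 m)"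
      by (rule scaled_form_in_S_forms_bounded_elems[OF that M])
    from bspec[OF null this] have "\<phi> a a / complex_of_real (M\<^sup>2) = 0" by simp
    moreover have "M \<noteq> 0" using M(1) by simp
    ultimately show ?thesis by simp
  qed
  then show "a = 0" using semisimple unfolding star_semisimple_def by blast
qed

section \<open>Bounded elements are exactly the two-sided weak multipliers\<close>

lemma weakly_bounded_linear_imp_bounded_linear:
  fixes T :: "'a \<Rightarrow> 'a"
  assumes F: "\<And>\<phi> y. \<phi> \<in> forms \<Longrightarrow> y \<in> A0 \<Longrightarrow> bounded_linear (F \<phi> y)"
    and T: "\<And>\<phi> y a. \<phi> \<in> forms \<Longrightarrow> y \<in> A0 \<Longrightarrow> \<phi> (T a) y = F \<phi> y a"
  shows "bounded_linear T"
proof (rule closed_graph_imp_bounded_linear)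
  show "linear T"
  proof (rule linearI)
    show "T (a + b) = T a + T b" for a b
      by (rule forms_separate) (simp add: T form_add_left linear_simps(1)[OF F])
    show "T (r *\<^sub>R a) = r *\<^sub>R T a" for r a
      by (rule forms_separate)
         (simp add: T linear_simps(5)[OF F] linear_simps(5)[OF bounded_linear_form_left])
  qed
  show "T a = c" if X: "X \<longlonglongrightarrow> a" and TX: "(\<lambda>n. T (X n)) \<longlonglongrightarrow> c" for X a c
  proof (rule forms_separate)
    fix \<phi> y assume \<phi>: "\<phi> \<in> forms" and y: "y \<in> A0"
    have "(\<lambda>n. \<phi> (T (X n)) y) \<longlonglongrightarrow> \<phi> (T a) y"
      using bounded_linear.tendsto[OF F[OF \<phi> y] X] by (simp add: T[OF \<phi> y])
    moreover have "(\<lambda>n. \<phi> (T (X n)) y) \<longlonglongrightarrow> \<phi> c y"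
      by (rule bounded_linear.tendsto[OF bounded_linear_form_left[OF \<phi>] TX])
    ultimately show "\<phi> (T a) y = \<phi> c y" by (rule LIMSEQ_unique)
  qed
qed

lemma Rw_continuous_right:
  assumes b: "b \<in> Rw A0 m sc invl" shows "continuous_on A0 (\<lambda>x. m x b)"
proof -
  have "is_weak_prod A0 m sc invl a b (a \<box> b)" for a
    using b weak_prod_eqI unfolding Rw_def by blast
  then have "bounded_linear (\<lambda>a. a \<box> b)"
    by (intro weakly_bounded_linear_imp_bounded_linear[where F = "\<lambda>\<phi> y a. \<phi> b (m (invl a) y)"])
       (auto intro: bounded_linear_compose[OF bounded_linear_form_right
          bounded_linear_compose[OF bounded_linear_m_right bounded_linear_invl]] simp: form_of_weak_prod)
  moreover have "x \<box> b = m x b" if "x \<in> A0" for x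
    by (rule weak_prod_eqI[OF is_weak_prod_A0_left[OF that]])
  ultimately show ?thesis using linear_continuous_on continuous_on_eq by metis
qed

lemma Lw_continuous_left:
  assumes b: "b \<in> Lw A0 m sc invl" shows "continuous_on A0 (\<lambda>x. m b x)"
proof -
  have "is_weak_prod A0 m sc invl b a (b \<box> a)" for a
    using b weak_prod_eqI unfolding Lw_def by blast
  then have "bounded_linear (\<lambda>a. b \<box> a)"
    by (intro weakly_bounded_linear_imp_bounded_linear[where F = "\<lambda>\<phi> y a. \<phi> a (m (invl b) y)"])
       (auto intro: bounded_linear_form_left simp: form_of_weak_prod)
  moreover have "b \<box> x = m b x" if "x \<in> A0" for x
    by (rule weak_prod_eqI[OF is_weak_prod_A0_right[OF that]])
  ultimately show ?thesis using linear_continuous_on continuous_on_eq by metis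
qed

lemma bounded_elems_eq_Rw_Lw: "Ab = Rw A0 m sc invl \<inter> Lw A0 m sc invl"
proof
  show "Ab \<subseteq> Rw A0 m sc invl \<inter> Lw A0 m sc invl"
    unfolding Rw_def Lw_def using is_weak_prod_bounded_left is_weak_prod_bounded_right by blast
  show "Rw A0 m sc invl \<inter> Lw A0 m sc invl \<subseteq> Ab"
    using Rw_continuous_right Lw_continuous_left by (auto simp: bounded_elems_def)
qed

lemma banach_star_algebra_bounded_elems: "banach_star_algebra_on Ab sc (\<box>) invl (bnorm A0 m)"
  unfolding banach_star_algebra_on_def
  by (intro conjI ballI allI impI)
     (simp_all add: bounded_elems_zero bounded_elems_add bounded_elems_sc bounded_elems_invl bounded_elems_wprod wprod_assoc
       wprod_add_left wprod_add_right wprod_sc_left wprod_sc_right invl_wprod bnorm_nonneg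
       bnorm_eq_0_iff bnorm_sc bnorm_invl bounded_elems_complete)

end

theorem lemma2p16:
  fixes sc :: "complex \<Rightarrow> 'a::banach \<Rightarrow> 'a"
    and A0 :: "'a set" and m :: "'a \<Rightarrow> 'a \<Rightarrow> 'a" and invl :: "'a \<Rightarrow> 'a" and u :: 'a
  assumes "banach_quasi_star_algebra sc A0 m invl u"
    and "star_semisimple UNIV A0 m sc invl norm"
  shows "banach_star_algebra_on (bounded_elems A0 m) sc (weak_prod A0 m sc invl) invl (bnorm A0 m)
       \<and> star_semisimple (bounded_elems A0 m) (bounded_elems A0 m) (weak_prod A0 m sc invl)
            sc invl (bnorm A0 m)
       \<and> bounded_elems A0 m = Rw A0 m sc invl \<inter> Lw A0 m sc invl"
proof -
  interpret semisimple_banach_quasi_star_algebra sc A0 m invl u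
    using assms by unfold_locales
  show ?thesis
    using banach_star_algebra_bounded_elems bounded_elems_star_semisimple bounded_elems_eq_Rw_Lw
    by blast
qed

end
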